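(* Let $\mathcal{R}\subset\mathbb{R}_{>0}^n$ be a compact log-convex set and let $\ell:\mathcal{R}\to\mathbb{R}_{>0}$ be continuous. Then for every $\tilde\varepsilon>0$ there exist a positive integer $p$ and, with $T=1/p$, two functions $\psi_T,\psi'_T\in\mathrm{GPOS}_T$ with rational parameters such that for all $\mathbf{x}\in\mathcal{R}$, $$\left|\frac{\ell(\mathbf{x})-\psi_T(\mathbf{x})/\psi'_T(\mathbf{x})}{\min\big(\ell(\mathbf{x}),\psi_T(\mathbf{x})/\psi'_T(\mathbf{x})\big)}\right|\leqslant\tilde\varepsilon.$$
   Context: A set $\mathcal{R}\subset\mathbb{R}_{>0}^n$ is log-convex if its image under the entrywise logarithm is convex. A posynomial is a function $\psi:\mathbb{R}_{>0}^n\to\mathbb{R}_{>0}$, $\psi(\mathbf{x})=\sum_{k=1}^K c_k\mathbf{x}^{\boldsymbol{\alpha}^{(k)}}$, with $K$ a positive integer, $c_k>0$, $\boldsymbol{\alpha}^{(k)}\in\mathbb{R}^n$, and $\mathbf{x}^{\boldsymbol{\alpha}}=x_1^{\alpha_1}\cdots x_n^{\alpha_n}$. For $T>0$, $\mathrm{GPOS}_T$ is the class of functions $\psi_T(\mathbf{x})=(\psi(\mathbf{x}^{1/T}))^T$ with $\psi$ a posynomial (powers taken entrywise). $\psi_T\in\mathrm{GPOS}_T$ has rational parameters if it can be written so with $T$ rational, all entries of the $\boldsymbol{\alpha}^{(k)}$ rational, and all $\log c_k$ rational. *)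

theory Defs
  imports "HOL-Analysis.Analysis"
begin

definition pos_orthant :: "(real^'n) set" where
  "pos_orthant = {x. \<forall>i. x $ i > 0}"

definition log_convex :: "(real^'n) set \<Rightarrow> bool" where
  "log_convex R \<longleftrightarrow> R \<subseteq> pos_orthant \<and> convex ((\<lambda>x. \<chi> i. ln (x $ i)) ` R)"

text \<open>A posynomial is given by a nonempty list of terms (c_k, alpha^(k)),
  evaluating to sum_k c_k * x^(alpha^(k)).\<close>
definition posy_eval :: "(real \<times> (real^'n)) list \<Rightarrow> real^'n \<Rightarrow> real" where
  "posy_eval ts x = (\<Sum>(c, a)\<leftarrow>ts. c * (\<Prod>i\<in>UNIV. (x $ i) powr (a $ i)))"

definition gpos_eval :: "real \<Rightarrow> (real \<times> (real^'n)) list \<Rightarrow> real^'n \<Rightarrow> real" where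
  "gpos_eval T ts x = (posy_eval ts (\<chi> i. (x $ i) powr (1 / T))) powr T"

definition gpos_rat :: "real \<Rightarrow> (real^'n \<Rightarrow> real) set" where
  "gpos_rat T = {f. T > 0 \<and> T \<in> \<rat> \<and>
     (\<exists>ts. ts \<noteq> [] \<and>
        (\<forall>(c, a) \<in> set ts. c > 0 \<and> ln c \<in> \<rat> \<and> (\<forall>i. a $ i \<in> \<rat>)) \<and>
        (\<forall>x \<in> pos_orthant. f x = gpos_eval T ts x))}"

end

theory Submission
  imports Defs
begin

(* Differences P - Q of posynomials with rational parameters form an algebra that contains the
   coordinate functions and approximates every constant, so by Stone-Weierstrass they
   approximate l uniformly on R. The difference is turned into a quotient by
   P^N / (sum_{i<N} Q^(N-1-i) P^i) = (P - Q) / (1 - (Q/P)^N): since P - Q stays close to l,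
   which is bounded away from 0, while Q stays bounded, Q/P is uniformly below 1, and for
   large N the quotient has small relative error. *)

section \<open>Posynomials with rational parameters\<close>

definition monomial_eval :: "real^'n \<Rightarrow> real^'n \<Rightarrow> real" where
  "monomial_eval a x = (\<Prod>i\<in>UNIV. x $ i powr a $ i)"

definition rat_posy :: "(real \<times> (real^'n)) list \<Rightarrow> bool" where
  "rat_posy ts \<longleftrightarrow> ts \<noteq> [] \<and> (\<forall>(c, a) \<in> set ts. c > 0 \<and> ln c \<in> \<rat> \<and> (\<forall>i. a $ i \<in> \<rat>))"

definition posy_mult :: "(real \<times> (real^'n)) list \<Rightarrow> (real \<times> (real^'n)) list \<Rightarrow> (real \<times> (real^'n)) list" where
  "posy_mult ts us = [(c * d, a + b). (c, a) \<leftarrow> ts, (d, b) \<leftarrow> us]"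

lemma posy_eval_Nil [simp]: "posy_eval [] x = 0"
  by (simp add: posy_eval_def)

lemma posy_eval_Cons [simp]: "posy_eval ((c, a) # ts) x = c * monomial_eval a x + posy_eval ts x"
  by (simp add: posy_eval_def monomial_eval_def)

lemma posy_eval_append [simp]: "posy_eval (ts @ us) x = posy_eval ts x + posy_eval us x"
  by (simp add: posy_eval_def)

lemma monomial_eval_add: "monomial_eval (a + b) x = monomial_eval a x * monomial_eval b x"
  by (simp add: monomial_eval_def powr_add prod.distrib)

lemma monomial_eval_pos: "x \<in> pos_orthant \<Longrightarrow> monomial_eval a x > 0"
  unfolding monomial_eval_def pos_orthant_def by (auto intro!: prod_pos simp: less_imp_neq[symmetric])

lemma monomial_eval_zero: "x \<in> pos_orthant \<Longrightarrow> monomial_eval 0 x = 1"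
  unfolding monomial_eval_def pos_orthant_def by (auto intro!: prod.neutral simp: less_imp_neq[symmetric])

lemma monomial_eval_axis: "x \<in> pos_orthant \<Longrightarrow> monomial_eval (axis i 1) x = x $ i"
  unfolding monomial_eval_def pos_orthant_def
  by (subst prod.remove[of _ i]) (auto intro!: prod.neutral simp: axis_def less_imp_le less_imp_neq[symmetric])

lemma posy_eval_mult: "posy_eval (posy_mult ts us) x = posy_eval ts x * posy_eval us x"
proof (induction ts)
  case (Cons t ts)
  have "posy_eval (map (\<lambda>(d, b). (c * d, a + b)) us) x = c * monomial_eval a x * posy_eval us x"
    for c a by (induction us) (auto simp: monomial_eval_add algebra_simps)
  with Cons show ?case
    by (cases t) (simp add: posy_mult_def algebra_simps)
qed (simp add: posy_mult_def)

lemma posy_eval_pos: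
  assumes "ts \<noteq> []" "\<forall>(c, a) \<in> set ts. c > 0" "x \<in> pos_orthant"
  shows "posy_eval ts x > 0"
  using assms
proof (induction ts)
  case (Cons t ts)
  obtain c a where t: "t = (c, a)" by force
  have "posy_eval ts x \<ge> 0"
    using Cons by (cases "ts = []") auto
  then show ?case using Cons.prems t monomial_eval_pos[of x a] by (simp add: add_pos_nonneg)
qed simp

lemma rat_posy_termD:
  assumes "rat_posy ts" "(c, a) \<in> set ts"
  shows "c > 0" "ln c \<in> \<rat>" "a $ i \<in> \<rat>"
proof -
  have "\<forall>(c, a) \<in> set ts. c > 0 \<and> ln c \<in> \<rat> \<and> (\<forall>i. a $ i \<in> \<rat>)"
    using assms(1) by (simp add: rat_posy_def)
  from bspec[OF this assms(2)] show "c > 0" "ln c \<in> \<rat>" "a $ i \<in> \<rat>"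
    by simp_all
qed

lemma rat_posy_mult:
  assumes "rat_posy ts" "rat_posy us"
  shows "rat_posy (posy_mult ts us)"
proof -
  have "posy_mult ts us \<noteq> []"
    using assms by (auto simp: rat_posy_def posy_mult_def neq_Nil_conv)
  moreover have "c > 0 \<and> ln c \<in> \<rat> \<and> (\<forall>i. a $ i \<in> \<rat>)" if mem: "(c, a) \<in> set (posy_mult ts us)" for c a
  proof -
    obtain c1 a1 c2 a2 where "(c1, a1) \<in> set ts" "(c2, a2) \<in> set us" "c = c1 * c2" "a = a1 + a2"
      using mem by (auto simp: posy_mult_def)
    then show ?thesis
      using rat_posy_termD[OF assms(1)] rat_posy_termD[OF assms(2)] by (simp add: ln_mult)
  qed
  ultimately show ?thesis
    by (auto simp: rat_posy_def)
qed

lemma gpos_rat_pos: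
  assumes "f \<in> gpos_rat T" "x \<in> pos_orthant"
  shows "f x > 0"
proof -
  obtain ts where ts: "rat_posy ts" "\<forall>y\<in>pos_orthant. f y = gpos_eval T ts y"
    using assms(1) by (auto simp: gpos_rat_def rat_posy_def)
  have "(\<chi> i. x $ i powr (1 / T)) \<in> pos_orthant"
    using assms(2) by (simp add: pos_orthant_def less_imp_neq[symmetric])
  then have "posy_eval ts (\<chi> i. x $ i powr (1 / T)) > 0"
    using ts(1) by (intro posy_eval_pos) (auto simp: rat_posy_def)
  then show ?thesis
    using ts(2) assms(2) by (simp add: gpos_eval_def)
qed

lemma gpos_rat_one_iff:
  "f \<in> gpos_rat 1 \<longleftrightarrow> (\<exists>ts. rat_posy ts \<and> (\<forall>x\<in>pos_orthant. f x = posy_eval ts x))"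
proof -
  have eval: "gpos_eval 1 ts x = posy_eval ts x" if "rat_posy ts" "x \<in> pos_orthant"
    for ts and x :: "real^'n"
  proof -
    have "(\<chi> i. x $ i powr (1 / 1)) = x"
      using that(2) by (simp add: vec_eq_iff pos_orthant_def less_imp_le)
    moreover have "posy_eval ts x > 0"
      using that by (intro posy_eval_pos) (auto simp: rat_posy_def)
    ultimately show ?thesis by (simp add: gpos_eval_def)
  qed
  have "f \<in> gpos_rat 1 \<longleftrightarrow> (\<exists>ts. rat_posy ts \<and> (\<forall>x\<in>pos_orthant. f x = gpos_eval 1 ts x))"
    by (simp add: gpos_rat_def rat_posy_def conj_assoc)
  also have "\<dots> \<longleftrightarrow> (\<exists>ts. rat_posy ts \<and> (\<forall>x\<in>pos_orthant. f x = posy_eval ts x))"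
    by (rule ex_cong1) (auto simp: eval)
  finally show ?thesis .
qed

lemma gpos_rat_one_exp_rat: "q \<in> \<rat> \<Longrightarrow> (\<lambda>_. exp q) \<in> gpos_rat 1"
  unfolding gpos_rat_one_iff
  by (rule exI[of _ "[(exp q, 0)]"]) (simp add: rat_posy_def monomial_eval_zero)

lemma gpos_rat_one_one: "(\<lambda>_. 1) \<in> gpos_rat 1"
  using gpos_rat_one_exp_rat[of 0] by simp

lemma gpos_rat_one_coordinate: "(\<lambda>x. x $ i) \<in> gpos_rat 1"
  unfolding gpos_rat_one_iff
  by (rule exI[of _ "[(1, axis i 1)]"]) (simp add: rat_posy_def monomial_eval_axis, simp add: axis_def)

lemma gpos_rat_one_add:
  assumes "f \<in> gpos_rat 1" "g \<in> gpos_rat 1"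
  shows "(\<lambda>x. f x + g x) \<in> gpos_rat 1"
proof -
  obtain ts us where "rat_posy ts" "\<forall>x\<in>pos_orthant. f x = posy_eval ts x"
    "rat_posy us" "\<forall>x\<in>pos_orthant. g x = posy_eval us x"
    using assms by (auto simp: gpos_rat_one_iff)
  then show ?thesis
    unfolding gpos_rat_one_iff by (intro exI[of _ "ts @ us"]) (auto simp: rat_posy_def)
qed

lemma gpos_rat_one_mult:
  assumes "f \<in> gpos_rat 1" "g \<in> gpos_rat 1"
  shows "(\<lambda>x. f x * g x) \<in> gpos_rat 1"
proof -
  obtain ts us where "rat_posy ts" "\<forall>x\<in>pos_orthant. f x = posy_eval ts x"
    "rat_posy us" "\<forall>x\<in>pos_orthant. g x = posy_eval us x"
    using assms by (auto simp: gpos_rat_one_iff)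
  then show ?thesis
    unfolding gpos_rat_one_iff
    by (intro exI[of _ "posy_mult ts us"]) (simp add: rat_posy_mult posy_eval_mult)
qed

lemma gpos_rat_one_power: "f \<in> gpos_rat 1 \<Longrightarrow> (\<lambda>x. f x ^ k) \<in> gpos_rat 1"
  by (induction k) (simp_all add: gpos_rat_one_one gpos_rat_one_mult)

lemma gpos_rat_one_sum:
  assumes "finite A" "A \<noteq> {}" "\<And>i. i \<in> A \<Longrightarrow> f i \<in> gpos_rat 1"
  shows "(\<lambda>x. \<Sum>i\<in>A. f i x) \<in> gpos_rat 1"
  using assms by (induction A rule: finite_ne_induct) (auto intro: gpos_rat_one_add)

lemma gpos_rat_one_continuous_on:
  fixes f :: "real^'n \<Rightarrow> real"
  assumes "f \<in> gpos_rat 1" "K \<subseteq> pos_orthant"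
  shows "continuous_on K f"
proof -
  obtain ts where ts: "\<forall>x\<in>pos_orthant. f x = posy_eval ts x"
    using assms(1) by (auto simp: gpos_rat_one_iff)
  have "continuous_on K (monomial_eval a)" for a :: "real^'n"
    unfolding monomial_eval_def using assms(2)
    by (intro continuous_intros) (auto simp: pos_orthant_def less_imp_neq[symmetric])
  then have "continuous_on K (posy_eval ts)"
    by (induction ts) (auto intro!: continuous_intros)
  then show ?thesis
    by (rule continuous_on_eq) (use ts assms(2) in auto)
qed

section \<open>Uniform approximation by differences of posynomials\<close>

definition posy_diff_approximable :: "(real^'n) set \<Rightarrow> (real^'n \<Rightarrow> real) \<Rightarrow> bool" where
  "posy_diff_approximable K h \<longleftrightarrow> (\<forall>e>0. \<exists>f g. f \<in> gpos_rat 1 \<and> g \<in> gpos_rat 1 \<and>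
     (\<forall>x\<in>K. \<bar>h x - (f x - g x)\<bar> < e))"

lemma exp_rat_between:
  fixes a b :: real
  assumes "0 < a" "a < b"
  shows "\<exists>q\<in>\<rat>. a < exp q \<and> exp q < b"
proof -
  obtain q where "q \<in> \<rat>" "ln a < q" "q < ln b"
    using assms Rats_dense_in_real[of "ln a" "ln b"] by auto
  moreover have "a < exp q" "exp q < b"
    using \<open>ln a < q\<close> \<open>q < ln b\<close> assms exp_less_mono[of "ln a" q] exp_less_mono[of q "ln b"]
    by simp_all
  ultimately show ?thesis
    by blast
qed

lemma posy_diff_approximable_gpos_rat:
  assumes "f \<in> gpos_rat 1"
  shows "posy_diff_approximable K f"
  unfolding posy_diff_approximable_def
  by (intro allI impI exI[of _ "\<lambda>x. f x + 1"] exI[of _ "\<lambda>_. 1"] conjI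
      gpos_rat_one_add[OF assms gpos_rat_one_one] gpos_rat_one_one) simp

lemma posy_diff_approximable_const: "posy_diff_approximable K (\<lambda>_. c)"
  unfolding posy_diff_approximable_def
proof (intro allI impI)
  fix e :: real
  assume "e > 0"
  have "\<exists>q'\<in>\<rat>. \<bar>c\<bar> + 1 < exp q' \<and> exp q' < \<bar>c\<bar> + 2"
    by (rule exp_rat_between) auto
  then obtain q' where q': "q' \<in> \<rat>" "\<bar>c\<bar> < exp q'"
    by auto
  have "0 < c + exp q'"
    using q'(2) abs_ge_minus_self[of c] by linarith
  then obtain q where q: "q \<in> \<rat>" "c + exp q' < exp q" "exp q < c + exp q' + e"
    using exp_rat_between[of "c + exp q'" "c + exp q' + e"] \<open>e > 0\<close> by auto
  show "\<exists>f g. f \<in> gpos_rat 1 \<and> g \<in> gpos_rat 1 \<and> (\<forall>x\<in>K. \<bar>c - (f x - g x)\<bar> < e)"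
    by (intro exI[of _ "\<lambda>_. exp q"] exI[of _ "\<lambda>_. exp q'"] conjI ballI
        gpos_rat_one_exp_rat q(1) q'(1)) (use q in linarith)
qed

lemma posy_diff_approximable_add:
  assumes "posy_diff_approximable K h" "posy_diff_approximable K k"
  shows "posy_diff_approximable K (\<lambda>x. h x + k x)"
  unfolding posy_diff_approximable_def
proof (intro allI impI)
  fix e :: real
  assume "e > 0"
  obtain f g where fg: "f \<in> gpos_rat 1" "g \<in> gpos_rat 1" "\<forall>x\<in>K. \<bar>h x - (f x - g x)\<bar> < e / 2"
    using assms(1) \<open>e > 0\<close> unfolding posy_diff_approximable_def by (meson half_gt_zero)
  obtain f' g' where fg': "f' \<in> gpos_rat 1" "g' \<in> gpos_rat 1" "\<forall>x\<in>K. \<bar>k x - (f' x - g' x)\<bar> < e / 2"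
    using assms(2) \<open>e > 0\<close> unfolding posy_diff_approximable_def by (meson half_gt_zero)
  have "\<bar>h x + k x - ((f x + f' x) - (g x + g' x))\<bar> < e" if "x \<in> K" for x
    using bspec[OF fg(3) that] bspec[OF fg'(3) that] by linarith
  then show "\<exists>f g. f \<in> gpos_rat 1 \<and> g \<in> gpos_rat 1 \<and> (\<forall>x\<in>K. \<bar>h x + k x - (f x - g x)\<bar> < e)"
    by (intro exI[of _ "\<lambda>x. f x + f' x"] exI[of _ "\<lambda>x. g x + g' x"] conjI ballI
        gpos_rat_one_add fg(1,2) fg'(1,2))
qed

lemma abs_mult_sub_mult_le:
  fixes a b c d M \<delta> :: real
  assumes "\<bar>a\<bar> \<le> M" "\<bar>b\<bar> \<le> M" "\<bar>a - c\<bar> \<le> \<delta>" "\<bar>b - d\<bar> \<le> \<delta>" "\<delta> \<le> 1"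
  shows "\<bar>a * b - c * d\<bar> \<le> (2 * M + 1) * \<delta>"
proof -
  have "\<bar>a * b - c * d\<bar> = \<bar>b * (a - c) + c * (b - d)\<bar>"
    by (simp add: algebra_simps)
  also have "\<dots> \<le> \<bar>b\<bar> * \<bar>a - c\<bar> + \<bar>c\<bar> * \<bar>b - d\<bar>"
    by (metis abs_mult abs_triangle_ineq)
  also have "\<dots> \<le> M * \<delta> + (M + 1) * \<delta>"
  proof (rule add_mono)
    show "\<bar>b\<bar> * \<bar>a - c\<bar> \<le> M * \<delta>"
      using assms by (intro mult_mono) auto
    show "\<bar>c\<bar> * \<bar>b - d\<bar> \<le> (M + 1) * \<delta>"
      using assms by (intro mult_mono) auto
  qed
  finally show ?thesis
    by (simp add: algebra_simps)
qed

lemma posy_diff_approximable_mult: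
  assumes "posy_diff_approximable K h" "posy_diff_approximable K k"
    and "bounded (h ` K)" "bounded (k ` K)"
  shows "posy_diff_approximable K (\<lambda>x. h x * k x)"
  unfolding posy_diff_approximable_def
proof (intro allI impI)
  fix e :: real
  assume "e > 0"
  obtain M where M: "M > 0" "\<forall>x\<in>K. \<bar>h x\<bar> \<le> M" "\<forall>x\<in>K. \<bar>k x\<bar> \<le> M"
  proof -
    obtain Mh Mk where "Mh > 0" "\<forall>x\<in>K. \<bar>h x\<bar> \<le> Mh" "Mk > 0" "\<forall>x\<in>K. \<bar>k x\<bar> \<le> Mk"
      using assms(3,4) by (auto simp: bounded_pos)
    then show thesis
      by (intro that[of "max Mh Mk"]) (auto intro: le_max_iff_disj[THEN iffD2])
  qed
  define \<delta> where "\<delta> = min 1 (e / (2 * M + 2))"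
  have \<delta>: "0 < \<delta>" "\<delta> \<le> 1" "(2 * M + 1) * \<delta> < e"
  proof -
    show "0 < \<delta>" "\<delta> \<le> 1"
      using \<open>e > 0\<close> M(1) by (auto simp: \<delta>_def)
    have "(2 * M + 1) * \<delta> < (2 * M + 2) * \<delta>"
      using \<open>0 < \<delta>\<close> by simp
    also have "\<dots> \<le> (2 * M + 2) * (e / (2 * M + 2))"
      using M(1) by (intro mult_left_mono) (auto simp: \<delta>_def)
    finally show "(2 * M + 1) * \<delta> < e"
      using M(1) by simp
  qed
  obtain f g where fg: "f \<in> gpos_rat 1" "g \<in> gpos_rat 1" "\<forall>x\<in>K. \<bar>h x - (f x - g x)\<bar> < \<delta>"
    using assms(1) \<delta>(1) unfolding posy_diff_approximable_def by blast
  obtain f' g' where fg': "f' \<in> gpos_rat 1" "g' \<in> gpos_rat 1" "\<forall>x\<in>K. \<bar>k x - (f' x - g' x)\<bar> < \<delta>"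
    using assms(2) \<delta>(1) unfolding posy_diff_approximable_def by blast
  have "\<bar>h x * k x - ((f x * f' x + g x * g' x) - (f x * g' x + g x * f' x))\<bar> < e" if "x \<in> K" for x
  proof -
    have "\<bar>h x * k x - (f x - g x) * (f' x - g' x)\<bar> \<le> (2 * M + 1) * \<delta>"
      using M fg(3) fg'(3) that \<delta>(2) by (intro abs_mult_sub_mult_le) auto
    then show ?thesis
      using \<delta>(3) by (simp add: algebra_simps)
  qed
  then show "\<exists>f g. f \<in> gpos_rat 1 \<and> g \<in> gpos_rat 1 \<and> (\<forall>x\<in>K. \<bar>h x * k x - (f x - g x)\<bar> < e)"
    by (intro exI[of _ "\<lambda>x. f x * f' x + g x * g' x"] exI[of _ "\<lambda>x. f x * g' x + g x * f' x"] conjI ballI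
        gpos_rat_one_add gpos_rat_one_mult fg(1,2) fg'(1,2))
qed

lemma posy_diff_approximable_uniform_limit:
  assumes "\<And>e. e > 0 \<Longrightarrow> \<exists>k. posy_diff_approximable K k \<and> (\<forall>x\<in>K. \<bar>h x - k x\<bar> < e)"
  shows "posy_diff_approximable K h"
  unfolding posy_diff_approximable_def
proof (intro allI impI)
  fix e :: real
  assume "e > 0"
  then obtain k where k: "posy_diff_approximable K k" "\<forall>x\<in>K. \<bar>h x - k x\<bar> < e / 2"
    using assms[of "e / 2"] by auto
  obtain f g where "f \<in> gpos_rat 1" "g \<in> gpos_rat 1" "\<forall>x\<in>K. \<bar>k x - (f x - g x)\<bar> < e / 2"
    using k(1) \<open>e > 0\<close> unfolding posy_diff_approximable_def by (meson half_gt_zero)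
  moreover have "\<bar>h x - (f x - g x)\<bar> < e" if "\<bar>h x - k x\<bar> < e / 2" "\<bar>k x - (f x - g x)\<bar> < e / 2" for x
    using that by linarith
  ultimately show "\<exists>f g. f \<in> gpos_rat 1 \<and> g \<in> gpos_rat 1 \<and> (\<forall>x\<in>K. \<bar>h x - (f x - g x)\<bar> < e)"
    using k(2) by blast
qed

lemma posy_diff_approximable_continuous:
  fixes h :: "real^'n \<Rightarrow> real"
  assumes "compact K" "K \<subseteq> pos_orthant" "continuous_on K h"
  shows "posy_diff_approximable K h"
proof (rule posy_diff_approximable_uniform_limit)
  fix e :: real
  assume "e > 0"
  let ?A = "\<lambda>k. continuous_on K k \<and> posy_diff_approximable K k"
  have bounded: "bounded (k ` K)" if "continuous_on K k" for k :: "real^'n \<Rightarrow> real"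
    using assms(1) that by (simp add: compact_continuous_image compact_imp_bounded)
  have "\<exists>k. ?A k \<and> (\<forall>x\<in>K. \<bar>h x - k x\<bar> < e)"
  proof (rule Stone_Weierstrass_HOL[where P = ?A])
    show "?A (\<lambda>x. c)" for c
      by (simp add: posy_diff_approximable_const)
    show "?A (\<lambda>x. f x + g x)" if "?A f \<and> ?A g" for f g
      using that by (simp add: continuous_on_add posy_diff_approximable_add)
    show "?A (\<lambda>x. f x * g x)" if "?A f \<and> ?A g" for f g
      using that bounded by (auto intro: continuous_intros posy_diff_approximable_mult)
    show "\<exists>f. ?A f \<and> f x \<noteq> f y" if distinct: "x \<in> K \<and> y \<in> K \<and> x \<noteq> y" for x y
    proof -
      obtain i where "x $ i \<noteq> y $ i"
        using distinct by (auto simp: vec_eq_iff)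
      moreover have "?A (\<lambda>x. x $ i)"
        by (auto intro: continuous_intros posy_diff_approximable_gpos_rat gpos_rat_one_coordinate)
      ultimately show ?thesis by blast
    qed
  qed (use assms \<open>e > 0\<close> in simp_all)
  then show "\<exists>k. posy_diff_approximable K k \<and> (\<forall>x\<in>K. \<bar>h x - k x\<bar> < e)"
    by blast
qed

section \<open>From differences to quotients\<close>

lemma relative_error_le:
  fixes L d \<eta> e :: real
  assumes "0 < L" "0 < e" "e \<le> 1" "\<bar>L - d\<bar> \<le> L * e / 4" "0 \<le> \<eta>" "\<eta> \<le> e / 4"
  shows "\<bar>(L - d / (1 - \<eta>)) / min L (d / (1 - \<eta>))\<bar> \<le> e"
proof -
  define r where "r = d / (1 - \<eta>)"
  have "1 - \<eta> > 0" "1 - \<eta> \<le> 1"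
    using assms by auto
  have "L - d \<le> L * e / 4" "d - L \<le> L * e / 4"
    using assms(4) by linarith+
  moreover have "L * e \<le> L"
    using assms(1,3) by (simp add: mult_left_le)
  ultimately have "L / 4 \<le> d"
    by linarith
  have "d \<le> L * (1 + e / 4)"
    using \<open>d - L \<le> L * e / 4\<close> by (simp add: algebra_simps)
  have r: "r * (1 - \<eta>) = d"
    using \<open>1 - \<eta> > 0\<close> by (simp add: r_def)
  have "d * (1 - \<eta>) \<le> d"
    using \<open>1 - \<eta> \<le> 1\<close> \<open>L / 4 \<le> d\<close> assms(1) by (simp add: mult_left_le)
  then have "d \<le> r"
    using \<open>1 - \<eta> > 0\<close> by (simp add: r_def le_divide_eq)
  show ?thesis
  proof (cases "L \<le> r")
    case True
    have "r * (1 - e / 4) \<le> r * (1 - \<eta>)"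
      using assms(6) \<open>d \<le> r\<close> \<open>L / 4 \<le> d\<close> assms(1) by (intro mult_left_mono) auto
    also have "\<dots> \<le> L * (1 + e / 4)"
      using r \<open>d \<le> L * (1 + e / 4)\<close> by simp
    also have "\<dots> \<le> (1 + e) * L * (1 - e / 4)"
    proof -
      have "L * (e * e) \<le> L * e"
        using assms(1-3) by (intro mult_left_mono) (auto simp: mult_left_le)
      moreover have "(1 + e) * L * (1 - e / 4) - L * (1 + e / 4) = L * e / 2 - L * (e * e) / 4"
        by (simp add: field_simps)
      ultimately show ?thesis
        using assms(1,2) mult_pos_pos[of L e] by linarith
    qed
    finally have "r \<le> (1 + e) * L"
      using assms(3) by (simp add: mult_right_le_imp_le)
    then show ?thesis
      using True assms(1) by (simp add: r_def[symmetric] min_def field_simps)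
  next
    case False
    have "L - r \<le> L * e / 4"
      using \<open>L - d \<le> L * e / 4\<close> \<open>d \<le> r\<close> by linarith
    also have "\<dots> \<le> e * r"
      using \<open>L / 4 \<le> d\<close> \<open>d \<le> r\<close> assms(2) by (simp add: mult_left_mono)
    finally show ?thesis
      using False \<open>L / 4 \<le> d\<close> \<open>d \<le> r\<close> assms(1) by (simp add: r_def[symmetric] min_def field_simps)
  qed
qed

lemma geometric_quotient_eq:
  fixes P Q :: real
  assumes "0 < Q" "Q < P" "N > 0"
  shows "P ^ N / (\<Sum>i<N. Q ^ (N - Suc i) * P ^ i) = (P - Q) / (1 - (Q / P) ^ N)"
proof -
  define S where "S = (\<Sum>i<N. Q ^ (N - Suc i) * P ^ i)"
  have "Q ^ N < P ^ N"
    using assms by (simp add: power_strict_mono)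
  moreover have "P ^ N - Q ^ N = (P - Q) * S"
    unfolding S_def by (rule power_diff_sumr2)
  ultimately have "S > 0"
    using assms(2) by (metis diff_gt_0_iff_gt zero_less_mult_pos)
  have "(P - Q) / (1 - (Q / P) ^ N) = (P - Q) * P ^ N / (P ^ N - Q ^ N)"
    using assms by (simp add: power_divide field_simps)
  also have "\<dots> = P ^ N / S"
    using \<open>P ^ N - Q ^ N = (P - Q) * S\<close> assms(2) by simp
  finally show ?thesis
    by (simp add: S_def)
qed

lemma geometric_quotient_relative_error:
  fixes L P Q G m e :: real
  assumes "0 < m" "m \<le> L" "0 < e" "e \<le> 1" "0 < Q" "Q \<le> G"
    and close: "\<bar>L - (P - Q)\<bar> < m * e / 4"
    and N: "(G / (m / 2 + G)) ^ N < e / 4"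
  shows "\<bar>(L - P ^ N / (\<Sum>i<N. Q ^ (N - Suc i) * P ^ i)) /
           min L (P ^ N / (\<Sum>i<N. Q ^ (N - Suc i) * P ^ i))\<bar> \<le> e"
proof -
  have "m * e \<le> m"
    using assms(1,4) by (simp add: mult_left_le)
  then have "m / 2 \<le> P - Q"
    using close assms(2) by linarith
  then have "Q < P"
    using assms(1) by linarith
  have "N > 0"
    using N assms(4) by (cases N) auto
  have "Q / P \<le> G / (m / 2 + G)"
  proof -
    have "Q * (m / 2) \<le> G * (P - Q)"
      using assms(1,5,6) \<open>m / 2 \<le> P - Q\<close> by (intro mult_mono) auto
    then show ?thesis
      using assms(1,5,6) \<open>Q < P\<close> by (simp add: divide_simps algebra_simps)
  qed
  then have "(Q / P) ^ N < e / 4"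
    using N assms(5) \<open>Q < P\<close> by (smt (verit) divide_pos_pos power_mono)
  moreover have "\<bar>L - (P - Q)\<bar> \<le> L * e / 4"
    using close assms(2,3) by (smt (verit) mult_right_mono divide_right_mono)
  ultimately show ?thesis
    unfolding geometric_quotient_eq[OF assms(5) \<open>Q < P\<close> \<open>N > 0\<close>]
    using assms \<open>Q < P\<close> by (intro relative_error_le) auto
qed

lemma compact_continuous_pos_bounded_below:
  fixes f :: "'a::topological_space \<Rightarrow> real"
  assumes "compact K" "continuous_on K f" "\<forall>x\<in>K. 0 < f x"
  shows "\<exists>m>0. \<forall>x\<in>K. m \<le> f x"
proof (cases "K = {}")
  case False
  then obtain x0 where "x0 \<in> K" "\<forall>x\<in>K. f x0 \<le> f x"
    using continuous_attains_inf[OF assms(1) False assms(2)] by blast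
  then show ?thesis
    using assms(3) by blast
qed (use zero_less_one in blast)

theorem theorem3:
  fixes R :: "(real^'n) set" and l :: "real^'n \<Rightarrow> real" and \<epsilon> :: real
  assumes "R \<subseteq> pos_orthant"
    and "compact R"
    and "log_convex R"
    and "continuous_on R l"
    and "\<forall>x\<in>R. l x > 0"
    and "\<epsilon> > 0"
  shows "\<exists>p::nat. p > 0 \<and>
           (\<exists>\<psi> \<psi>'. \<psi> \<in> gpos_rat (1 / real p) \<and> \<psi>' \<in> gpos_rat (1 / real p) \<and>
              (\<forall>x\<in>R. \<bar>(l x - \<psi> x / \<psi>' x) / min (l x) (\<psi> x / \<psi>' x)\<bar> \<le> \<epsilon>))"
proof -
  obtain m where m: "m > 0" "\<forall>x\<in>R. m \<le> l x"
    using compact_continuous_pos_bounded_below assms(2,4,5) by blast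
  define e where "e = min \<epsilon> 1"
  have e: "0 < e" "e \<le> 1" "e \<le> \<epsilon>"
    using assms(6) by (auto simp: e_def)
  have "m * e / 4 > 0"
    using m(1) e(1) by simp
  then obtain P Q where PQ: "P \<in> gpos_rat 1" "Q \<in> gpos_rat 1"
    and close: "\<forall>x\<in>R. \<bar>l x - (P x - Q x)\<bar> < m * e / 4"
    using posy_diff_approximable_continuous[OF assms(2,1,4)]
    unfolding posy_diff_approximable_def by blast
  have "bounded (Q ` R)"
    using gpos_rat_one_continuous_on[OF PQ(2) assms(1)] assms(2)
    by (simp add: compact_continuous_image compact_imp_bounded)
  then obtain G where G: "G > 0" "\<forall>x\<in>R. Q x \<le> G"
    unfolding bounded_pos by (auto simp: abs_le_iff)
  have "G / (m / 2 + G) < 1"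
    using G(1) m(1) by simp
  then obtain N where N: "(G / (m / 2 + G)) ^ N < e / 4"
    using real_arch_pow_inv[of "e / 4"] e(1) by auto
  then have "N > 0"
    using e(2) by (cases N) auto
  define \<psi>' where "\<psi>' = (\<lambda>x. \<Sum>i<N. Q x ^ (N - Suc i) * P x ^ i)"
  have "(\<lambda>x. P x ^ N) \<in> gpos_rat 1" "\<psi>' \<in> gpos_rat 1"
    using PQ \<open>N > 0\<close> unfolding \<psi>'_def
    by (auto intro!: gpos_rat_one_power gpos_rat_one_sum gpos_rat_one_mult)
  moreover have "\<bar>(l x - P x ^ N / \<psi>' x) / min (l x) (P x ^ N / \<psi>' x)\<bar> \<le> \<epsilon>" if "x \<in> R" for x
  proof -
    have "Q x > 0"
      using gpos_rat_pos[OF PQ(2)] assms(1) that by blast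
    then have "\<bar>(l x - P x ^ N / \<psi>' x) / min (l x) (P x ^ N / \<psi>' x)\<bar> \<le> e"
      unfolding \<psi>'_def using m G close N that e(1,2)
      by (intro geometric_quotient_relative_error) auto
    then show ?thesis
      using e(3) by linarith
  qed
  ultimately show ?thesis
    by (intro exI[of _ 1] exI[of _ "\<lambda>x. P x ^ N"] exI[of _ \<psi>'] conjI ballI) simp_all
qed

end
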